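(* Assume every policy $\mu^i$ is $L_\mu$-Lipschitz, $l$ is $\bar L_\mathrm{l}$-smooth, and $V$ is $\bar L_\mathrm{V}$-smooth with $V(x)\ge-\underline{c}_\mathrm{V}+\underline{L}_\mathrm{V}|x|^2/2$ for some $\underline{L}_\mathrm{V}>0$, $\underline{c}_\mathrm{V}\ge0$. Then there exist constants $c_2,c_\mathrm{o}\ge0$ such that $$\mathrm{E}[V(f(x,\mu^i(x)+n_\mathrm{u})+n)]\le c_2V(x)-\mathrm{E}[l(x,\mu^i(x)+n_\mathrm{u})]+c_\mathrm{o}+(\bar L_\mathrm{V}L^2+\bar L_\mathrm{l})d_\mathrm{u}\sigma_\mathrm{u}^2+\frac{\bar L_\mathrm{V}}2d_\mathrm{x}\sigma^2$$ for all $x\in\mathbb{R}^{d_\mathrm{x}}$, all $\sigma_\mathrm{u}>0$ and all $i\in\{1,\dots,m\}$, where $n\sim\mathcal N(0,\sigma^2I)$ and $n_\mathrm{u}\sim\mathcal N(0,\sigma_\mathrm{u}^2I)$ are independent, $c_2=(8L^2\bar L_\mathrm{V}(1+L_\mu)^2+2\bar L_\mathrm{l}(1+2L_\mu^2))/\underline{L}_\mathrm{V}$, and $c_\mathrm{o}$ can be expressed as an explicit function of $\max_i|\mu^i(0)|$, $V(0)$, $|\nabla V(0)|$, $l(0,0)$, $|\nabla l(0,0)|$, $|f(0,\mu(0))|$ and $\underline{c}_\mathrm{V}$.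
   Context: $f:\mathbb{R}^{d_\mathrm{x}}\times\mathbb{R}^{d_\mathrm{u}}\to\mathbb{R}^{d_\mathrm{x}}$ is the true dynamics, $L$-Lipschitz in $(x,u)$, equal to one of finitely many candidates $f^1,\dots,f^m$ (say $f=f^{i^*}$), each with an associated policy $\mu^i:\mathbb{R}^{d_\mathrm{x}}\to\mathbb{R}^{d_\mathrm{u}}$; $\mu:=\mu^{i^*}$. $\sigma>0$. The stage cost is $l:\mathbb{R}^{d_\mathrm{x}}\times\mathbb{R}^{d_\mathrm{u}}\to\mathbb{R}_{\ge0}$. $V:\mathbb{R}^{d_\mathrm{x}}\to\mathbb{R}_{\ge0}$ is a cost-to-go function for $f$ and $\mu$: for a constant $L_\mathrm{u}$ and a constant $\gamma$, $V(x)\ge\mathrm{E}[l(x,u)+V(f(x,u)+n)]-\gamma-d_\mathrm{u}L_\mathrm{u}\sigma_\mathrm{u}^2$ for all $x$, with $u=\mu(x)+n_\mathrm{u}$, $n\sim\mathcal N(0,\sigma^2I)$, $n_\mathrm{u}\sim\mathcal N(0,\sigma_\mathrm{u}^2I)$. A function is $\beta$-smooth if it is differentiable with $\beta$-Lipschitz gradient; $|\cdot|$ is the Euclidean norm. *)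

theory Defs
  imports "HOL-Analysis.Analysis" "HOL-Probability.Probability"
begin

definition grad :: "('a::euclidean_space \<Rightarrow> real) \<Rightarrow> 'a \<Rightarrow> 'a" where
  "grad F x = (SOME g. (F has_derivative (\<lambda>h. g \<bullet> h)) (at x))"

definition smooth_with :: "real \<Rightarrow> ('a::euclidean_space \<Rightarrow> real) \<Rightarrow> bool" where
  "smooth_with \<beta> F \<longleftrightarrow>
     (\<forall>x. \<exists>g. (F has_derivative (\<lambda>h. g \<bullet> h)) (at x)) \<and>
     (\<forall>x y. norm (grad F x - grad F y) \<le> \<beta> * norm (x - y))"

definition gauss :: "real \<Rightarrow> 'a::euclidean_space measure" where
  "gauss s = density lborel
     (\<lambda>x::'a. ennreal ((2 * pi * s\<^sup>2) powr (- real DIM('a) / 2) * exp (- (norm x)\<^sup>2 / (2 * s\<^sup>2))))"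

definition cost_to_go ::
  "('x::euclidean_space \<times> 'u::euclidean_space \<Rightarrow> 'x) \<Rightarrow> ('x \<Rightarrow> 'u) \<Rightarrow> ('x \<times> 'u \<Rightarrow> real)
   \<Rightarrow> ('x \<Rightarrow> real) \<Rightarrow> real \<Rightarrow> real \<Rightarrow> real \<Rightarrow> real \<Rightarrow> bool" where
  "cost_to_go f mu l V s su Lu \<gamma> \<longleftrightarrow>
     (\<forall>x. V x \<ge> integral\<^sup>L (gauss su \<Otimes>\<^sub>M gauss s)
                   (\<lambda>(nu, n). l (x, mu x + nu) + V (f (x, mu x + nu) + n))
                 - \<gamma> - real DIM('u) * Lu * su\<^sup>2)"

end

theory Submission
  imports Defs
begin

(* The descent lemma for V, averaged over the symmetric Gaussian noise n, gives
   E V(y + n) <= V y + LVbar/2 d_x sigma^2, since the gradient term averages out.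
   Smoothness at 0 and the Lipschitz bounds on f and mu^i bound V(f(x, mu^i x + nu)) and
   l(x, mu^i x + nu) by quadratics in |x| and |nu|. The Gaussian second moment
   E |nu|^2 = d_u sigma_u^2 turns the nu-terms into the noise terms of the bound, and the
   quadratic lower bound on V absorbs the |x|^2-terms into c2 V x. *)

lemma norm_power2_eq_sum_Basis:
  fixes x :: "'a::euclidean_space"
  shows "(norm x)\<^sup>2 = (\<Sum>b\<in>Basis. (x \<bullet> b)\<^sup>2)"
  unfolding power2_norm_eq_inner by (subst euclidean_inner) (simp add: power2_eq_square)

lemma powr_minus_half_eq_power:
  assumes "a > 0"
  shows "a powr (- real n / 2) = (1 / sqrt a) ^ n"
proof -
  have "(1 / sqrt a) ^ n = (a powr (1/2)) powr (- real n)"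
    using assms by (simp add: powr_half_sqrt power_one_over powr_realpow[symmetric] powr_minus_divide)
  then show ?thesis by (simp add: powr_powr)
qed

lemma gauss_density_eq_prod_normal_density:
  fixes x :: "'a::euclidean_space"
  assumes "s > 0"
  shows "(2 * pi * s\<^sup>2) powr (- real DIM('a) / 2) * exp (- (norm x)\<^sup>2 / (2 * s\<^sup>2))
         = (\<Prod>b\<in>Basis. normal_density 0 s (x \<bullet> b))"
proof -
  have "(2 * pi * s\<^sup>2) powr (- real DIM('a) / 2) = (\<Prod>b\<in>(Basis::'a set). 1 / sqrt (2 * pi * s\<^sup>2))"
    using assms by (subst powr_minus_half_eq_power) auto
  moreover have "exp (- (norm x)\<^sup>2 / (2 * s\<^sup>2)) = (\<Prod>b\<in>Basis. exp (- (x \<bullet> b)\<^sup>2 / (2 * s\<^sup>2)))"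
    unfolding norm_power2_eq_sum_Basis by (simp add: exp_sum[symmetric] sum_negf sum_divide_distrib)
  ultimately show ?thesis
    by (simp only: normal_density_def prod.distrib diff_zero)
qed

lemma space_gauss [simp]: "space (gauss s) = UNIV"
  and sets_gauss [simp, measurable_cong]: "sets (gauss s) = sets borel"
  by (simp_all add: gauss_def)

lemma nn_integral_gauss:
  assumes "s > 0" and [measurable]: "g \<in> borel_measurable borel"
  shows "(\<integral>\<^sup>+x. g x \<partial>(gauss s :: 'a::euclidean_space measure))
      = (\<integral>\<^sup>+x. ennreal (\<Prod>b\<in>Basis. normal_density 0 s (x \<bullet> b)) * g x \<partial>lborel)"
  unfolding gauss_def gauss_density_eq_prod_normal_density[OF assms(1)]
  by (subst nn_integral_density) auto

lemma nn_integral_gauss_prod: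
  assumes "s > 0"
    and [measurable]: "\<And>b. b \<in> Basis \<Longrightarrow> \<phi> b \<in> borel_measurable borel" and "\<And>b t. 0 \<le> \<phi> b t"
  shows "(\<integral>\<^sup>+x. ennreal (\<Prod>b\<in>Basis. \<phi> b (x \<bullet> b)) \<partial>(gauss s :: 'a::euclidean_space measure))
       = (\<Prod>b\<in>Basis. \<integral>\<^sup>+t. ennreal (normal_density 0 s t * \<phi> b t) \<partial>lborel)"
proof -
  have "(\<integral>\<^sup>+x. ennreal (\<Prod>b\<in>Basis. \<phi> b (x \<bullet> b)) \<partial>(gauss s :: 'a measure))
      = (\<integral>\<^sup>+x. (\<Prod>b\<in>Basis. ennreal (normal_density 0 s (x \<bullet> b) * \<phi> b (x \<bullet> b))) \<partial>lborel)"
    using assms(1,3) by (subst nn_integral_gauss)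
      (auto intro!: nn_integral_cong simp: prod_ennreal prod.distrib ennreal_mult'' prod_nonneg)
  also have "\<dots> = (\<Prod>b\<in>Basis. \<integral>\<^sup>+t. ennreal (normal_density 0 s t * \<phi> b t) \<partial>lborel)"
    by (rule nn_integral_lborel_prod) (use assms(3) in auto)
  finally show ?thesis .
qed

lemma nn_integral_normal_density:
  "s > 0 \<Longrightarrow> (\<integral>\<^sup>+t. ennreal (normal_density 0 s t) \<partial>lborel) = 1"
  by (subst nn_integral_eq_integral) auto

lemma nn_integral_normal_density_power2:
  assumes "s > 0"
  shows "(\<integral>\<^sup>+t. ennreal (normal_density 0 s t * t\<^sup>2) \<partial>lborel) = ennreal (s\<^sup>2)"
  using integrable_normal_moment[OF assms, of 0 2] integral_normal_moment_even[OF assms, of 0 1] assms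
  by (subst nn_integral_eq_integral) (auto simp: power2_eq_square)

lemma prob_space_gauss:
  assumes "s > 0"
  shows "prob_space (gauss s :: 'a::euclidean_space measure)"
proof
  have "emeasure (gauss s :: 'a measure) (space (gauss s))
      = (\<integral>\<^sup>+x. ennreal (\<Prod>b\<in>(Basis::'a set). 1) \<partial>(gauss s :: 'a measure))"
    by simp
  also have "\<dots> = 1"
    using assms by (subst nn_integral_gauss_prod) (auto simp: nn_integral_normal_density)
  finally show "emeasure (gauss s :: 'a measure) (space (gauss s)) = 1" .
qed

lemma nn_integral_gauss_norm_power2:
  assumes "s > 0"
  shows "(\<integral>\<^sup>+x. ennreal ((norm x)\<^sup>2) \<partial>(gauss s :: 'a::euclidean_space measure))
       = ennreal (real DIM('a) * s\<^sup>2)"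
proof -
  have coord: "(\<integral>\<^sup>+x. ennreal ((x \<bullet> b)\<^sup>2) \<partial>(gauss s :: 'a measure)) = ennreal (s\<^sup>2)"
    if b: "b \<in> Basis" for b :: 'a
  proof -
    have "(\<integral>\<^sup>+x. ennreal (\<Prod>b'\<in>Basis. if b' = b then (x \<bullet> b')\<^sup>2 else 1) \<partial>(gauss s :: 'a measure))
        = (\<Prod>b'\<in>Basis. \<integral>\<^sup>+t. ennreal (normal_density 0 s t * (if b' = b then t\<^sup>2 else 1)) \<partial>lborel)"
      by (rule nn_integral_gauss_prod[OF assms]) auto
    also have "\<dots> = (\<Prod>b'\<in>(Basis::'a set). if b' = b then ennreal (s\<^sup>2) else 1)"
      using assms by (intro prod.cong) (auto simp: nn_integral_normal_density nn_integral_normal_density_power2)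
    finally show ?thesis
      using b by (simp add: prod.delta')
  qed
  have "(\<integral>\<^sup>+x. ennreal ((norm x)\<^sup>2) \<partial>(gauss s :: 'a measure))
      = (\<Sum>b\<in>Basis. \<integral>\<^sup>+x. ennreal ((x \<bullet> b)\<^sup>2) \<partial>(gauss s :: 'a measure))"
    unfolding norm_power2_eq_sum_Basis by (subst nn_integral_sum[symmetric]) (auto simp: sum_ennreal)
  also have "\<dots> = ennreal (real DIM('a) * s\<^sup>2)"
    by (simp add: coord ennreal_of_nat_eq_real_of_nat ennreal_mult)
  finally show ?thesis .
qed

lemma nn_integral_gauss_le_quadratic:
  assumes "s > 0" "0 \<le> a" "0 \<le> b" "\<And>x. \<phi> x \<le> a + b * (norm x)\<^sup>2"
  shows "(\<integral>\<^sup>+x. ennreal (\<phi> x) \<partial>(gauss s :: 'a::euclidean_space measure))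
       \<le> ennreal (a + b * (real DIM('a) * s\<^sup>2))"
proof -
  interpret prob_space "gauss s :: 'a measure" by (rule prob_space_gauss[OF assms(1)])
  have split: "ennreal (a + b * r) = ennreal a + ennreal b * ennreal r" if "0 \<le> r" for r
    using assms(2,3) that by (simp add: ennreal_plus ennreal_mult del: ennreal_plus_if)
  have "(\<integral>\<^sup>+x. ennreal (\<phi> x) \<partial>(gauss s :: 'a measure))
      \<le> (\<integral>\<^sup>+x. ennreal a + ennreal b * ennreal ((norm x)\<^sup>2) \<partial>(gauss s :: 'a measure))"
    using assms(4) by (intro nn_integral_mono) (simp only: split[symmetric] zero_le_power2 ennreal_leI)
  also have "\<dots> = (\<integral>\<^sup>+x. ennreal a \<partial>(gauss s :: 'a measure))
      + (\<integral>\<^sup>+x. ennreal b * ennreal ((norm x)\<^sup>2) \<partial>(gauss s :: 'a measure))"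
    by (rule nn_integral_add) auto
  also have "\<dots> = ennreal a + ennreal b * ennreal (real DIM('a) * s\<^sup>2)"
    by (simp add: nn_integral_cmult nn_integral_gauss_norm_power2[OF assms(1)] emeasure_space_1[unfolded space_gauss])
  also have "\<dots> = ennreal (a + b * (real DIM('a) * s\<^sup>2))"
    by (simp add: split)
  finally show ?thesis .
qed

lemma nn_integral_lborel_uminus:
  assumes [measurable]: "g \<in> borel_measurable borel"
  shows "(\<integral>\<^sup>+x. g (- x) \<partial>(lborel :: 'a::euclidean_space measure)) = (\<integral>\<^sup>+x. g x \<partial>lborel)"
  by (subst (2) lborel_affine[of "-1" 0]) (simp_all add: nn_integral_density nn_integral_distr)

lemma nn_integral_gauss_uminus:
  assumes "s > 0" and [measurable]: "g \<in> borel_measurable borel"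
  shows "(\<integral>\<^sup>+x. g (- x) \<partial>(gauss s :: 'a::euclidean_space measure)) = (\<integral>\<^sup>+x. g x \<partial>gauss s)"
  using assms(1) nn_integral_lborel_uminus[of "\<lambda>x. ennreal (\<Prod>b\<in>Basis. normal_density 0 s (x \<bullet> b)) * g x"]
  by (simp add: nn_integral_gauss normal_density_def)

lemma integral_le_of_nn_integral_le:
  fixes f :: "'a \<Rightarrow> real"
  assumes "f \<in> borel_measurable M" "\<And>x. 0 \<le> f x" "(\<integral>\<^sup>+x. ennreal (f x) \<partial>M) \<le> ennreal B" "0 \<le> B"
  shows "integral\<^sup>L M f \<le> B"
  using assms by (subst integral_eq_nn_integral) (auto intro: enn2real_leI)

lemma integral_gauss_le_quadratic:
  assumes "s > 0" "\<phi> \<in> borel_measurable borel" "\<And>x. 0 \<le> \<phi> x" "\<And>x. \<phi> x \<le> a + b * (norm x)\<^sup>2" "0 \<le> b"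
  shows "integral\<^sup>L (gauss s :: 'a::euclidean_space measure) \<phi> \<le> a + b * (real DIM('a) * s\<^sup>2)"
proof -
  have "0 \<le> a" using assms(3,4)[of 0] by simp
  then show ?thesis
    using assms by (intro integral_le_of_nn_integral_le nn_integral_gauss_le_quadratic) auto
qed

lemma smooth_with_has_derivative:
  assumes "smooth_with \<beta> F"
  shows "(F has_derivative (\<lambda>h. grad F x \<bullet> h)) (at x)"
  using assms unfolding smooth_with_def grad_def by (metis (mono_tags, lifting) someI_ex)

lemma smooth_with_grad_lipschitz:
  "smooth_with \<beta> F \<Longrightarrow> norm (grad F x - grad F y) \<le> \<beta> * norm (x - y)"
  unfolding smooth_with_def by blast

lemma smooth_with_nonneg:
  assumes "smooth_with \<beta> (F :: 'a::euclidean_space \<Rightarrow> real)"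
  shows "0 \<le> \<beta>"
proof -
  obtain b :: 'a where "b \<in> Basis" using nonempty_Basis by blast
  then show ?thesis
    using smooth_with_grad_lipschitz[OF assms, of b 0] by (simp add: order_trans[OF norm_ge_zero])
qed

lemma smooth_with_borel_measurable:
  "smooth_with \<beta> F \<Longrightarrow> F \<in> borel_measurable borel"
  by (meson borel_measurable_continuous_onI continuous_at_imp_continuous_on
      has_derivative_continuous smooth_with_has_derivative)

lemma smooth_with_descent:
  fixes F :: "'a::euclidean_space \<Rightarrow> real"
  assumes "smooth_with \<beta> F"
  shows "F y \<le> F x + grad F x \<bullet> (y - x) + \<beta> / 2 * (norm (y - x))\<^sup>2"
proof -
  define d where "d = y - x"
  define \<psi> where "\<psi> t = F (x + t *\<^sub>R d) - t * (grad F x \<bullet> d) - \<beta> / 2 * t\<^sup>2 * (norm d)\<^sup>2" for t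
  have deriv: "(\<psi> has_real_derivative
      (grad F (x + t *\<^sub>R d) - grad F x) \<bullet> d - \<beta> * t * (norm d)\<^sup>2) (at t)" for t
  proof -
    have "((\<lambda>t. F (x + t *\<^sub>R d)) has_derivative (\<lambda>h. grad F (x + t *\<^sub>R d) \<bullet> (h *\<^sub>R d))) (at t)"
      by (rule has_derivative_compose[OF _ smooth_with_has_derivative[OF assms]])
        (auto intro!: derivative_eq_intros)
    then have "((\<lambda>t. F (x + t *\<^sub>R d)) has_real_derivative grad F (x + t *\<^sub>R d) \<bullet> d) (at t)"
      unfolding has_field_derivative_def by (rule has_derivative_eq_rhs) (auto simp: fun_eq_iff)
    then show ?thesis
      unfolding \<psi>_def by (auto intro!: derivative_eq_intros simp: inner_diff_left)
  qed
  have "(grad F (x + t *\<^sub>R d) - grad F x) \<bullet> d \<le> \<beta> * t * (norm d)\<^sup>2" if "0 \<le> t" for t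
  proof -
    have "(grad F (x + t *\<^sub>R d) - grad F x) \<bullet> d \<le> norm (grad F (x + t *\<^sub>R d) - grad F x) * norm d"
      by (rule norm_cauchy_schwarz)
    also have "\<dots> \<le> \<beta> * norm (t *\<^sub>R d) * norm d"
      using smooth_with_grad_lipschitz[OF assms, of "x + t *\<^sub>R d" x] by (intro mult_right_mono) auto
    finally show ?thesis
      using that by (simp add: power2_eq_square mult.assoc)
  qed
  then have "\<psi> 1 \<le> \<psi> 0"
    using deriv by (intro DERIV_nonpos_imp_nonincreasing[of 0 1]) force+
  then show ?thesis
    unfolding \<psi>_def d_def by simp
qed

lemma smooth_with_le_norm_grad:
  assumes "smooth_with \<beta> F"
  shows "F y \<le> F 0 + norm (grad F 0) * norm y + \<beta> / 2 * (norm y)\<^sup>2"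
  using smooth_with_descent[OF assms, of y 0] norm_cauchy_schwarz[of "grad F 0" y] by simp

lemma smooth_with_0_grad_eq_0:
  fixes F :: "'a::euclidean_space \<Rightarrow> real"
  assumes "smooth_with 0 F" and "\<And>z. c \<le> F z"
  shows "grad F x = 0"
proof (rule ccontr)
  define g where "g = grad F x"
  define t where "t = (F x - c + 1) / (g \<bullet> g)"
  assume "grad F x \<noteq> 0"
  then have "g \<bullet> g > 0" by (simp add: g_def)
  have "F (x - t *\<^sub>R g) \<le> F x - t * (g \<bullet> g)"
    using smooth_with_descent[OF assms(1), of "x - t *\<^sub>R g" x] by (simp add: g_def)
  also have "\<dots> = c - 1"
    using \<open>g \<bullet> g > 0\<close> by (simp add: t_def)
  finally show False
    using assms(2)[of "x - t *\<^sub>R g"] by simp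
qed

lemma nn_integral_gauss_shift_le:
  fixes V :: "'a::euclidean_space \<Rightarrow> real"
  assumes "s > 0" "smooth_with \<beta> V" "\<And>z. 0 \<le> V z"
  shows "(\<integral>\<^sup>+n. ennreal (V (y + n)) \<partial>(gauss s :: 'a measure))
       \<le> ennreal (V y + \<beta> / 2 * (real DIM('a) * s\<^sup>2))"
proof -
  have [measurable]: "V \<in> borel_measurable borel"
    by (rule smooth_with_borel_measurable[OF assms(2)])
  have "0 \<le> \<beta>"
    by (rule smooth_with_nonneg[OF assms(2)])
  define I where "I = (\<integral>\<^sup>+n. ennreal (V (y + n)) \<partial>(gauss s :: 'a measure))"
  have pointwise: "ennreal (V (y + n)) + ennreal (V (y - n)) \<le> ennreal (2 * V y + \<beta> * (norm n)\<^sup>2)" for n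
    using smooth_with_descent[OF assms(2), of "y + n" y] smooth_with_descent[OF assms(2), of "y - n" y]
    by (subst ennreal_plus[symmetric]) (auto intro!: ennreal_leI assms(3))
  have "I + I = (\<integral>\<^sup>+n. ennreal (V (y + n)) + ennreal (V (y - n)) \<partial>(gauss s :: 'a measure))"
    using nn_integral_gauss_uminus[OF assms(1), of "\<lambda>n. ennreal (V (y + n))"]
    by (simp add: I_def nn_integral_add)
  also have "\<dots> \<le> (\<integral>\<^sup>+n. ennreal (2 * V y + \<beta> * (norm n)\<^sup>2) \<partial>(gauss s :: 'a measure))"
    by (intro nn_integral_mono pointwise)
  also have "\<dots> \<le> ennreal (2 * V y + \<beta> * (real DIM('a) * s\<^sup>2))"
    by (rule nn_integral_gauss_le_quadratic) (use assms(1,3) \<open>0 \<le> \<beta>\<close> in auto)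
  finally have "I + I \<le> ennreal (2 * V y + \<beta> * (real DIM('a) * s\<^sup>2))" .
  then have "I \<le> ennreal (V y + \<beta> / 2 * (real DIM('a) * s\<^sup>2))"
  proof (cases I rule: ennreal_cases)
    case (real r)
    with \<open>I + I \<le> _\<close> assms(3)[of y] \<open>0 \<le> \<beta>\<close> show ?thesis
      by (simp add: ennreal_plus[symmetric] del: ennreal_plus)
  qed (simp add: top_unique)
  then show ?thesis
    by (simp add: I_def)
qed

lemma integral_gauss_pair_smooth_le:
  fixes V :: "'x::euclidean_space \<Rightarrow> real" and h :: "'u::euclidean_space \<Rightarrow> 'x"
  assumes "s > 0" "t > 0" "smooth_with \<beta> V" "\<And>z. 0 \<le> V z" "h \<in> borel_measurable borel"
    and "0 \<le> b" "\<And>u. V (h u) \<le> a + b * (norm u)\<^sup>2"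
  shows "integral\<^sup>L (gauss t \<Otimes>\<^sub>M gauss s) (\<lambda>(u, n). V (h u + n))
       \<le> a + b * (real DIM('u) * t\<^sup>2) + \<beta> / 2 * (real DIM('x) * s\<^sup>2)"
proof -
  interpret gs: prob_space "gauss s :: 'x measure"
    by (rule prob_space_gauss[OF assms(1)])
  have [measurable]: "V \<in> borel_measurable borel" "h \<in> borel_measurable borel"
    using smooth_with_borel_measurable[OF assms(3)] assms(5) by auto
  have meas: "(\<lambda>(u, n). V (h u + n)) \<in> borel_measurable (gauss t \<Otimes>\<^sub>M gauss s)"
    by measurable
  have "0 \<le> \<beta>"
    by (rule smooth_with_nonneg[OF assms(3)])
  have "0 \<le> a"
    using assms(4)[of "h 0"] assms(7)[of 0] by simp
  have "(\<integral>\<^sup>+p. ennreal ((\<lambda>(u, n). V (h u + n)) p) \<partial>(gauss t \<Otimes>\<^sub>M gauss s))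
      = (\<integral>\<^sup>+u. \<integral>\<^sup>+n. ennreal (V (h u + n)) \<partial>gauss s \<partial>(gauss t :: 'u measure))"
    using gs.nn_integral_fst[of "\<lambda>p. ennreal ((\<lambda>(u, n). V (h u + n)) p)" "gauss t"] meas by simp
  also have "\<dots> \<le> (\<integral>\<^sup>+u. ennreal (V (h u) + \<beta> / 2 * (real DIM('x) * s\<^sup>2)) \<partial>(gauss t :: 'u measure))"
    by (intro nn_integral_mono nn_integral_gauss_shift_le assms(1,3,4))
  also have "\<dots> \<le> ennreal (a + \<beta> / 2 * (real DIM('x) * s\<^sup>2) + b * (real DIM('u) * t\<^sup>2))"
    by (rule nn_integral_gauss_le_quadratic) (use assms(2,6,7) \<open>0 \<le> a\<close> \<open>0 \<le> \<beta>\<close> in auto)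
  finally have "integral\<^sup>L (gauss t \<Otimes>\<^sub>M gauss s) (\<lambda>(u, n). V (h u + n))
      \<le> a + \<beta> / 2 * (real DIM('x) * s\<^sup>2) + b * (real DIM('u) * t\<^sup>2)"
    using assms(1,2,6) \<open>0 \<le> a\<close> \<open>0 \<le> \<beta>\<close>
    by (intro integral_le_of_nn_integral_le[OF meas]) (auto simp: assms(4) split: prod.split)
  then show ?thesis
    by linarith
qed

lemma mult_le_young:
  fixes g a c :: real
  assumes "0 \<le> c" and "c = 0 \<Longrightarrow> g = 0"
  shows "g * a \<le> g\<^sup>2 / (4 * c) + c * a\<^sup>2"
proof (cases "c = 0")
  case False
  with assms have "0 \<le> (g - 2 * c * a)\<^sup>2 / (4 * c)" by simp
  with False assms(1) show ?thesis by (simp add: field_simps power2_eq_square)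
qed (use assms in simp)

lemma power2_add_le_weighted:
  fixes p q e :: real
  assumes "e > 0"
  shows "(p + q)\<^sup>2 \<le> (1 + e) * p\<^sup>2 + (1 + 1 / e) * q\<^sup>2"
proof -
  have "0 \<le> (e * p - q)\<^sup>2 / e" using assms by simp
  with assms show ?thesis by (simp add: field_simps power2_eq_square)
qed

lemma linear_plus_quadratic_le:
  fixes g \<beta> t a b :: real
  assumes "0 \<le> g" "0 \<le> \<beta>" "\<beta> = 0 \<Longrightarrow> g = 0" "0 \<le> t" "t \<le> a + b"
  shows "g * t + \<beta> / 2 * t\<^sup>2 \<le> g * a + g\<^sup>2 / \<beta> + 3 / 2 * \<beta> * a\<^sup>2 + \<beta> * b\<^sup>2"
proof -
  have "g * t \<le> g * a + g * b"
    using mult_left_mono[OF assms(5,1)] by (simp add: distrib_left)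
  moreover have "g * b \<le> g\<^sup>2 / \<beta> + \<beta> / 4 * b\<^sup>2"
    using mult_le_young[of "\<beta> / 4" g b] assms(2,3) by simp
  moreover have "t\<^sup>2 \<le> 3 * a\<^sup>2 + 3 / 2 * b\<^sup>2"
    using power_mono[OF assms(5,4), of 2] power2_add_le_weighted[of 2 a b] by simp
  then have "\<beta> / 2 * t\<^sup>2 \<le> \<beta> / 2 * (3 * a\<^sup>2 + 3 / 2 * b\<^sup>2)"
    using assms(2) by (intro mult_left_mono) auto
  ultimately show ?thesis
    by (simp add: algebra_simps)
qed

lemma lipschitz_on_norm_le:
  assumes "L-lipschitz_on UNIV f"
  shows "norm (f z) \<le> norm (f w) + L * norm (z - w)"
  using lipschitz_onD[OF assms, of z w] norm_triangle_sub[of "f z" "f w"] by (simp add: dist_norm)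

lemma norm_closed_loop_le:
  fixes f :: "'x::euclidean_space \<times> 'u::euclidean_space \<Rightarrow> 'x" and \<mu> :: "'x \<Rightarrow> 'u"
  assumes "L-lipschitz_on UNIV f" "L\<mu>-lipschitz_on UNIV \<mu>" "norm (\<mu> 0) \<le> M" "norm u0 \<le> M"
  shows "norm (f (x, \<mu> x + \<nu>))
       \<le> (norm (f (0, u0)) + 2 * L * M) + L * (1 + L\<mu>) * norm x + L * norm \<nu>"
proof -
  have "0 \<le> L"
    by (rule lipschitz_on_nonneg[OF assms(1)])
  have "norm (\<mu> x) \<le> M + L\<mu> * norm x"
    using lipschitz_on_norm_le[OF assms(2), of x 0] assms(3) by simp
  then have "norm ((x, \<mu> x + \<nu>) - (0, u0)) \<le> (1 + L\<mu>) * norm x + norm \<nu> + 2 * M"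
    using norm_Pair_le[of x "\<mu> x + \<nu> - u0"] norm_triangle_ineq[of "\<mu> x" \<nu>]
      norm_triangle_ineq4[of "\<mu> x + \<nu>" u0] assms(4)
    by (simp add: algebra_simps)
  then have "L * norm ((x, \<mu> x + \<nu>) - (0, u0)) \<le> L * ((1 + L\<mu>) * norm x + norm \<nu> + 2 * M)"
    using \<open>0 \<le> L\<close> by (rule mult_left_mono)
  then show ?thesis
    using lipschitz_on_norm_le[OF assms(1), of "(x, \<mu> x + \<nu>)" "(0, u0)"] by (simp add: algebra_simps)
qed

lemma value_closed_loop_le:
  fixes f :: "'x::euclidean_space \<times> 'u::euclidean_space \<Rightarrow> 'x" and \<mu> :: "'x \<Rightarrow> 'u"
    and V :: "'x \<Rightarrow> real"
  assumes "smooth_with \<beta> V" "\<And>z. 0 \<le> V z"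
    and "L-lipschitz_on UNIV f" "L\<mu>-lipschitz_on UNIV \<mu>" "norm (\<mu> 0) \<le> M" "norm u0 \<le> M"
  defines "K \<equiv> norm (f (0, u0)) + 2 * L * M" and "g \<equiv> norm (grad V 0)"
  shows "V (f (x, \<mu> x + \<nu>)) \<le> V 0 + g * K + 3 * g\<^sup>2 / (2 * \<beta>) + 3 * \<beta> * K\<^sup>2
           + 4 * \<beta> * L\<^sup>2 * (1 + L\<mu>)\<^sup>2 * (norm x)\<^sup>2 + \<beta> * L\<^sup>2 * (norm \<nu>)\<^sup>2"
proof -
  define y where "y = f (x, \<mu> x + \<nu>)"
  define Q where "Q = L * (1 + L\<mu>) * norm x"
  have "0 \<le> \<beta>" "0 \<le> L" "0 \<le> L\<mu>" "0 \<le> M"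
    using smooth_with_nonneg[OF assms(1)] lipschitz_on_nonneg[OF assms(3)]
      lipschitz_on_nonneg[OF assms(4)] order_trans[OF norm_ge_zero assms(5)] by auto
  then have "0 \<le> K" "0 \<le> Q"
    by (simp_all add: K_def Q_def)
  have g_0: "g = 0" if "\<beta> = 0"
    using smooth_with_0_grad_eq_0[of V 0] assms(1,2) that by (simp add: g_def)
  have "V y \<le> V 0 + (g * norm y + \<beta> / 2 * (norm y)\<^sup>2)"
    using smooth_with_le_norm_grad[OF assms(1), of y] by (simp add: g_def)
  also have "\<dots> \<le> V 0 + (g * (K + Q) + g\<^sup>2 / \<beta> + 3 / 2 * \<beta> * (K + Q)\<^sup>2 + \<beta> * (L * norm \<nu>)\<^sup>2)"
    using norm_closed_loop_le[OF assms(3-6), of x \<nu>] \<open>0 \<le> \<beta>\<close> g_0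
    by (intro add_left_mono linear_plus_quadratic_le) (auto simp: g_def K_def Q_def y_def)
  finally have "V y \<le> V 0 + g * K + g * Q + g\<^sup>2 / \<beta> + 3 / 2 * \<beta> * (K + Q)\<^sup>2 + \<beta> * L\<^sup>2 * (norm \<nu>)\<^sup>2"
    by (simp add: algebra_simps power_mult_distrib)
  moreover have "g * Q \<le> g\<^sup>2 / (2 * \<beta>) + \<beta> / 2 * Q\<^sup>2"
    using mult_le_young[of "\<beta> / 2" g Q] \<open>0 \<le> \<beta>\<close> g_0 by simp
  moreover have "3 / 2 * \<beta> * (K + Q)\<^sup>2 \<le> 3 / 2 * \<beta> * (2 * K\<^sup>2 + 2 * Q\<^sup>2)"
    using power2_add_le_weighted[of 1 K Q] \<open>0 \<le> \<beta>\<close> by (intro mult_left_mono) auto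
  moreover have "7 / 2 * \<beta> * Q\<^sup>2 \<le> 4 * \<beta> * L\<^sup>2 * (1 + L\<mu>)\<^sup>2 * (norm x)\<^sup>2"
    using \<open>0 \<le> \<beta>\<close> by (simp add: Q_def power_mult_distrib)
  ultimately show ?thesis
    unfolding y_def by (simp add: field_simps)
qed

lemma cost_closed_loop_le:
  fixes l :: "'x::euclidean_space \<times> 'u::euclidean_space \<Rightarrow> real" and \<mu> :: "'x \<Rightarrow> 'u"
  assumes "smooth_with \<beta> l" "\<And>z. 0 \<le> l z" "L\<mu>-lipschitz_on UNIV \<mu>" "norm (\<mu> 0) \<le> M"
  defines "h \<equiv> norm (grad l (0, 0))"
  shows "l (x, \<mu> x + \<nu>) \<le> l (0, 0) + h * M + h\<^sup>2 / \<beta> + h\<^sup>2 * (1 + L\<mu>)\<^sup>2 / (2 * \<beta>) + 6 * \<beta> * M\<^sup>2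
           + \<beta> * (1 + 2 * L\<mu>\<^sup>2) * (norm x)\<^sup>2 + \<beta> * (norm \<nu>)\<^sup>2"
proof -
  define u where "u = \<mu> x + \<nu>"
  define w where "w = M + L\<mu> * norm x"
  have "0 \<le> \<beta>" "0 \<le> L\<mu>" "0 \<le> M"
    using smooth_with_nonneg[OF assms(1)] lipschitz_on_nonneg[OF assms(3)]
      order_trans[OF norm_ge_zero assms(4)] by auto
  have h_0: "h = 0" if "\<beta> = 0"
    using smooth_with_0_grad_eq_0[of l 0] assms(1,2) that by (simp add: h_def zero_prod_def)
  have "norm u \<le> w + norm \<nu>"
    using lipschitz_on_norm_le[OF assms(3), of x 0] assms(4) norm_triangle_ineq[of "\<mu> x" \<nu>]
    by (simp add: u_def w_def)
  have "l (x, u) \<le> l (0, 0) + h * norm (x, u) + \<beta> / 2 * (norm (x, u))\<^sup>2"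
    using smooth_with_le_norm_grad[OF assms(1), of "(x, u)"] by (simp add: h_def zero_prod_def)
  also have "\<dots> \<le> l (0, 0) + h * norm x + \<beta> / 2 * (norm x)\<^sup>2 + (h * norm u + \<beta> / 2 * (norm u)\<^sup>2)"
    using norm_Pair_le[of x u] mult_left_mono[of "norm (x, u)" "norm x + norm u" h]
    by (simp add: h_def norm_Pair algebra_simps)
  also have "\<dots> \<le> l (0, 0) + h * norm x + \<beta> / 2 * (norm x)\<^sup>2
      + (h * w + h\<^sup>2 / \<beta> + 3 / 2 * \<beta> * w\<^sup>2 + \<beta> * (norm \<nu>)\<^sup>2)"
    using \<open>norm u \<le> w + norm \<nu>\<close> \<open>0 \<le> \<beta>\<close> h_0
    by (intro add_left_mono linear_plus_quadratic_le) (auto simp: h_def)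
  finally have "l (x, u) \<le> l (0, 0) + h * M + h * (1 + L\<mu>) * norm x + \<beta> / 2 * (norm x)\<^sup>2 + h\<^sup>2 / \<beta>
      + 3 / 2 * \<beta> * w\<^sup>2 + \<beta> * (norm \<nu>)\<^sup>2"
    by (simp add: w_def algebra_simps)
  moreover have "h * (1 + L\<mu>) * norm x \<le> h\<^sup>2 * (1 + L\<mu>)\<^sup>2 / (2 * \<beta>) + \<beta> / 2 * (norm x)\<^sup>2"
    using mult_le_young[of "\<beta> / 2" "h * (1 + L\<mu>)" "norm x"] \<open>0 \<le> \<beta>\<close> h_0
    by (simp add: power_mult_distrib)
  moreover have "3 / 2 * \<beta> * w\<^sup>2 \<le> 3 / 2 * \<beta> * (4 * M\<^sup>2 + 4 / 3 * (L\<mu> * norm x)\<^sup>2)"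
    using power2_add_le_weighted[of 3 M "L\<mu> * norm x"] \<open>0 \<le> \<beta>\<close>
    by (intro mult_left_mono) (auto simp: w_def)
  ultimately show ?thesis
    unfolding u_def by (simp add: field_simps power_mult_distrib)
qed

(* When \<beta>V or \<beta>l vanishes, the quotients are junk values 0;
   this is harmless because the corresponding gradient at 0 then vanishes too
   (smooth_with_0_grad_eq_0). *)
definition drift_offset ::
  "real \<Rightarrow> real \<Rightarrow> real \<Rightarrow> real \<Rightarrow> real \<Rightarrow> real \<Rightarrow> real \<Rightarrow> real \<Rightarrow> real \<Rightarrow> real \<Rightarrow> real \<Rightarrow> real \<Rightarrow> real"
  where "drift_offset L L\<mu> \<beta>V \<beta>l c2 cV M V0 gV l0 gl F0 =
    (let K = F0 + 2 * L * M in
      V0 + gV * K + 3 * gV\<^sup>2 / (2 * \<beta>V) + 3 * \<beta>V * K\<^sup>2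
      + l0 + gl * M + gl\<^sup>2 / \<beta>l + gl\<^sup>2 * (1 + L\<mu>)\<^sup>2 / (2 * \<beta>l) + 6 * \<beta>l * M\<^sup>2 + c2 * cV)"

lemma expected_value_plus_cost_le:
  fixes f :: "'x::euclidean_space \<times> 'u::euclidean_space \<Rightarrow> 'x" and \<mu> :: "'x \<Rightarrow> 'u"
    and l :: "'x \<times> 'u \<Rightarrow> real" and V :: "'x \<Rightarrow> real"
  assumes f: "L-lipschitz_on UNIV f"
    and \<mu>: "L\<mu>-lipschitz_on UNIV \<mu>" "norm (\<mu> 0) \<le> M" "norm u0 \<le> M"
    and l: "smooth_with \<beta>l l" "\<And>z. 0 \<le> l z"
    and V: "smooth_with \<beta>V V" "\<And>x. 0 \<le> V x"
    and V_lower: "LVlow > 0" "\<And>x. - cV + LVlow * (norm x)\<^sup>2 / 2 \<le> V x"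
    and \<sigma>: "\<sigma> > 0" "\<sigma>u > 0"
  defines "c2 \<equiv> (8 * L\<^sup>2 * \<beta>V * (1 + L\<mu>)\<^sup>2 + 2 * \<beta>l * (1 + 2 * L\<mu>\<^sup>2)) / LVlow"
  shows "integral\<^sup>L (gauss \<sigma>u \<Otimes>\<^sub>M gauss \<sigma>) (\<lambda>(\<nu>, n). V (f (x, \<mu> x + \<nu>) + n))
           + integral\<^sup>L (gauss \<sigma>u) (\<lambda>\<nu>. l (x, \<mu> x + \<nu>))
         \<le> c2 * V x + drift_offset L L\<mu> \<beta>V \<beta>l c2 cV M (V 0) (norm (grad V 0))
                         (l (0, 0)) (norm (grad l (0, 0))) (norm (f (0, u0)))
           + (\<beta>V * L\<^sup>2 + \<beta>l) * real DIM('u) * \<sigma>u\<^sup>2 + \<beta>V / 2 * real DIM('x) * \<sigma>\<^sup>2"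
proof -
  have [measurable]: "f \<in> borel_measurable borel" "l \<in> borel_measurable borel"
    using borel_measurable_continuous_onI[OF lipschitz_on_continuous_on[OF f]]
      smooth_with_borel_measurable[OF l(1)] by auto
  have "0 \<le> \<beta>V" "0 \<le> \<beta>l" "0 \<le> L"
    using smooth_with_nonneg[OF V(1)] smooth_with_nonneg[OF l(1)] lipschitz_on_nonneg[OF f] by auto
  have value_bound: "integral\<^sup>L (gauss \<sigma>u \<Otimes>\<^sub>M gauss \<sigma>) (\<lambda>(\<nu>, n). V (f (x, \<mu> x + \<nu>) + n))
      \<le> (V 0 + norm (grad V 0) * (norm (f (0, u0)) + 2 * L * M)
          + 3 * (norm (grad V 0))\<^sup>2 / (2 * \<beta>V) + 3 * \<beta>V * (norm (f (0, u0)) + 2 * L * M)\<^sup>2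
          + 4 * \<beta>V * L\<^sup>2 * (1 + L\<mu>)\<^sup>2 * (norm x)\<^sup>2)
        + \<beta>V * L\<^sup>2 * (real DIM('u) * \<sigma>u\<^sup>2) + \<beta>V / 2 * (real DIM('x) * \<sigma>\<^sup>2)"
    using \<open>0 \<le> \<beta>V\<close> \<open>0 \<le> L\<close>
    by (intro integral_gauss_pair_smooth_le[OF \<sigma>(1,2) V(1,2)] value_closed_loop_le[OF V f \<mu>]) auto
  have cost_bound: "integral\<^sup>L (gauss \<sigma>u) (\<lambda>\<nu>. l (x, \<mu> x + \<nu>))
      \<le> (l (0, 0) + norm (grad l (0, 0)) * M + (norm (grad l (0, 0)))\<^sup>2 / \<beta>l
          + (norm (grad l (0, 0)))\<^sup>2 * (1 + L\<mu>)\<^sup>2 / (2 * \<beta>l) + 6 * \<beta>l * M\<^sup>2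
          + \<beta>l * (1 + 2 * L\<mu>\<^sup>2) * (norm x)\<^sup>2)
        + \<beta>l * (real DIM('u) * \<sigma>u\<^sup>2)"
    using \<open>0 \<le> \<beta>l\<close>
    by (intro integral_gauss_le_quadratic[OF \<sigma>(2)] cost_closed_loop_le[OF l \<mu>(1,2)]) (auto simp: l(2))
  have "(4 * \<beta>V * L\<^sup>2 * (1 + L\<mu>)\<^sup>2 + \<beta>l * (1 + 2 * L\<mu>\<^sup>2)) * (norm x)\<^sup>2
      = c2 * (LVlow * (norm x)\<^sup>2 / 2)"
    using V_lower(1) by (simp add: c2_def field_simps)
  also have "\<dots> \<le> c2 * (V x + cV)"
  proof (rule mult_left_mono)
    show "0 \<le> c2"
      unfolding c2_def using V_lower(1) \<open>0 \<le> \<beta>V\<close> \<open>0 \<le> \<beta>l\<close> by simp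
    show "LVlow * (norm x)\<^sup>2 / 2 \<le> V x + cV"
      using V_lower(2)[of x] by simp
  qed
  finally show ?thesis
    using value_bound cost_bound by (simp add: drift_offset_def Let_def algebra_simps)
qed

theorem lemma3:
  fixes L Lmu LVbar Llbar LVlow cV :: real
  shows "\<exists>C :: real \<Rightarrow> real \<Rightarrow> real \<Rightarrow> real \<Rightarrow> real \<Rightarrow> real \<Rightarrow> real.
    (\<forall>a b c d e g. C a b c d e g \<ge> 0) \<and>
    (\<forall>(f :: 'x::euclidean_space \<times> 'u::euclidean_space \<Rightarrow> 'x)
       (fs :: nat \<Rightarrow> 'x \<times> 'u \<Rightarrow> 'x) (mus :: nat \<Rightarrow> 'x \<Rightarrow> 'u) (m :: nat) (istar :: nat)
       (l :: 'x \<times> 'u \<Rightarrow> real) (V :: 'x \<Rightarrow> real) (\<sigma> :: real) (\<sigma>u0 :: real) (Lu :: real) (\<gamma> :: real).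
       ( istar \<in> {1..m} \<and> f = fs istar \<and> L-lipschitz_on UNIV f \<and> \<sigma> > 0
       \<and> (\<forall>z. l z \<ge> 0) \<and> (\<forall>x. V x \<ge> 0)
       \<and> cost_to_go f (mus istar) l V \<sigma> \<sigma>u0 Lu \<gamma>
       \<and> (\<forall>i\<in>{1..m}. Lmu-lipschitz_on UNIV (mus i))
       \<and> smooth_with Llbar l \<and> smooth_with LVbar V
       \<and> LVlow > 0 \<and> cV \<ge> 0 \<and> (\<forall>x. V x \<ge> - cV + LVlow * (norm x)\<^sup>2 / 2) )
       \<longrightarrow>
       (\<forall>x. \<forall>\<sigma>u > 0. \<forall>i\<in>{1..m}.
          integral\<^sup>L (gauss \<sigma>u \<Otimes>\<^sub>M gauss \<sigma>) (\<lambda>(nu, n). V (f (x, mus i x + nu) + n))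
          \<le> ((8 * L\<^sup>2 * LVbar * (1 + Lmu)\<^sup>2 + 2 * Llbar * (1 + 2 * Lmu\<^sup>2)) / LVlow) * V x
             - integral\<^sup>L (gauss \<sigma>u) (\<lambda>nu. l (x, mus i x + nu))
             + C (Max ((\<lambda>j. norm (mus j 0)) ` {1..m})) (V 0) (norm (grad V 0))
                 (l (0, 0)) (norm (grad l (0, 0))) (norm (f (0, mus istar 0)))
             + (LVbar * L\<^sup>2 + Llbar) * real DIM('u) * \<sigma>u\<^sup>2
             + LVbar / 2 * real DIM('x) * \<sigma>\<^sup>2))"
proof -
  define c2 where "c2 = (8 * L\<^sup>2 * LVbar * (1 + Lmu)\<^sup>2 + 2 * Llbar * (1 + 2 * Lmu\<^sup>2)) / LVlow"
  define C where "C a b c d e g = max 0 (drift_offset L Lmu LVbar Llbar c2 cV a b c d e g)"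
    for a b c d e g
  have bound: "integral\<^sup>L (gauss \<sigma>u \<Otimes>\<^sub>M gauss \<sigma>) (\<lambda>(nu, n). V (f (x, mus i x + nu) + n))
      \<le> c2 * V x - integral\<^sup>L (gauss \<sigma>u) (\<lambda>nu. l (x, mus i x + nu))
        + C (Max ((\<lambda>j. norm (mus j 0)) ` {1..m})) (V 0) (norm (grad V 0))
            (l (0, 0)) (norm (grad l (0, 0))) (norm (f (0, mus istar 0)))
        + (LVbar * L\<^sup>2 + Llbar) * real DIM('u) * \<sigma>u\<^sup>2 + LVbar / 2 * real DIM('x) * \<sigma>\<^sup>2"
    if "istar \<in> {1..m}" "L-lipschitz_on UNIV f" "\<sigma> > 0" "\<forall>z. 0 \<le> l z" "\<forall>x. 0 \<le> V x"
      "\<forall>i\<in>{1..m}. Lmu-lipschitz_on UNIV (mus i)" "smooth_with Llbar l" "smooth_with LVbar V"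
      "LVlow > 0" "\<forall>x. - cV + LVlow * (norm x)\<^sup>2 / 2 \<le> V x" "\<sigma>u > 0" "i \<in> {1..m}"
    for f :: "'x \<times> 'u \<Rightarrow> 'x" and mus :: "nat \<Rightarrow> 'x \<Rightarrow> 'u" and m istar l V \<sigma> \<sigma>u i x
  proof -
    have "norm (mus j 0) \<le> Max ((\<lambda>j. norm (mus j 0)) ` {1..m})" if "j \<in> {1..m}" for j
      using that by (intro Max_ge) auto
    then show ?thesis
      using expected_value_plus_cost_le[of L f Lmu "mus i" "Max ((\<lambda>j. norm (mus j 0)) ` {1..m})"
          "mus istar 0" Llbar l LVbar V LVlow cV \<sigma> \<sigma>u x] that
      by (simp add: C_def c2_def)
  qed
  show ?thesis
  proof (intro exI[of _ C] conjI allI impI ballI)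
    show "0 \<le> C a b c d e g" for a b c d e g
      by (simp add: C_def)
  qed (elim conjE, unfold c2_def[symmetric], rule bound, assumption+)
qed

end
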